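(* Let $k$ be an algebraically closed field, $Y\subseteq k^n$ an algebraic set with radical ideal $\mathfrak a=I(Y)\subseteq P=k[X_1,\ldots,X_n]$, coordinate ring $R=P/\mathfrak a$, and $x=(x_1,\ldots,x_n)$ the coordinate functions (images of $X_i$) in $R$, regarded as acting on the $R$-module $R$. Then $\sigma_{\mathrm p}(x,R)$ equals the set $Y_{is}$ of isolated points of $Y$. If $q=(q_1,\ldots,q_m)$ are polynomials in $P$ such that $R$ is integral over $k[q(x)]$ (so $q:Y\to k^m$ is a finite morphism), then $\sigma(q(x),R)=q(Y)$ and $\sigma_{\mathrm p}(q(x),R)=q(Y_{is})$.
   Context: For a commutative $k$-algebra $R$, an $R$-module $M$ and an $n$-tuple $y$ in $R$, the Koszul complex $\operatorname{Kos}(y,M)$ is $0\leftarrow M\leftarrow M\otimes_k\wedge^1k^n\leftarrow\cdots\leftarrow M\otimes_k\wedge^nk^n\leftarrow 0$ with differential $\partial(u\otimes e_{i_1}\wedge\cdots\wedge e_{i_p})=\sum_{s=1}^p(-1)^{s+1}y_{i_s}u\otimes e_{i_1}\wedge\cdots\wedge\widehat{e_{i_s}}\wedge\cdots\wedge e_{i_p}$, with homology $H_p(y,M)$. For $a\in k^n$, $y-a=(y_1-a_1,\ldots,y_n-a_n)$. Taylor spectrum $\sigma(y,M)$: the set of $a\in k^n$ with $\operatorname{Kos}(y-a,M)$ not exact. Point spectrum $\sigma_{\mathrm p}(y,M)$: the set of $a\in k^n$ with $H_n(y-a,M)\neq0$ (joint eigenvalues). *)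

theory Defs
  imports "HOL-Computational_Algebra.Polynomial" "HOL-Library.Function_Algebras"
begin

definition alg_closed :: "'k::field itself \<Rightarrow> bool" where
  "alg_closed _ \<longleftrightarrow> (\<forall>p :: 'k poly. degree p > 0 \<longrightarrow> (\<exists>z. poly p z = 0))"

text \<open>Points of k^n are functions nat => k vanishing at indices >= n.\<close>
definition kspace :: "nat \<Rightarrow> (nat \<Rightarrow> 'k::zero) set" where
  "kspace n = {a. \<forall>i\<ge>n. a i = 0}"

text \<open>Polynomial functions k^n -> k in the variables X_0,...,X_(n-1)
  (for infinite k, e.g. algebraically closed k, these are exactly the polynomials).\<close>
inductive_set polyfun :: "nat \<Rightarrow> ((nat \<Rightarrow> 'k::comm_ring_1) \<Rightarrow> 'k) set" for n where
  const: "(\<lambda>v. c) \<in> polyfun n"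
| var: "i < n \<Longrightarrow> (\<lambda>v. v i) \<in> polyfun n"
| add: "f \<in> polyfun n \<Longrightarrow> g \<in> polyfun n \<Longrightarrow> (\<lambda>v. f v + g v) \<in> polyfun n"
| mult: "f \<in> polyfun n \<Longrightarrow> g \<in> polyfun n \<Longrightarrow> (\<lambda>v. f v * g v) \<in> polyfun n"

definition zero_set :: "nat \<Rightarrow> ((nat \<Rightarrow> 'k::comm_ring_1) \<Rightarrow> 'k) set \<Rightarrow> (nat \<Rightarrow> 'k) set" where
  "zero_set n F = {v \<in> kspace n. \<forall>f\<in>F. f v = 0}"

definition algebraic_set :: "nat \<Rightarrow> (nat \<Rightarrow> 'k::comm_ring_1) set \<Rightarrow> bool" where
  "algebraic_set n Y \<longleftrightarrow> (\<exists>F \<subseteq> polyfun n. Y = zero_set n F)"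

text \<open>Isolated points (in the Zariski topology) of Y.\<close>
definition isolated_points :: "nat \<Rightarrow> (nat \<Rightarrow> 'k::comm_ring_1) set \<Rightarrow> (nat \<Rightarrow> 'k) set" where
  "isolated_points n Y = {y \<in> Y. algebraic_set n (Y - {y})}"

text \<open>Restriction of a function to Y (zero outside Y); the coordinate ring
  R = P / I(Y) is represented as the ring of restrictions of polynomial functions to Y.\<close>
definition restr :: "(nat \<Rightarrow> 'k) set \<Rightarrow> ((nat \<Rightarrow> 'k) \<Rightarrow> 'k::zero) \<Rightarrow> (nat \<Rightarrow> 'k) \<Rightarrow> 'k" where
  "restr Y f = (\<lambda>v. if v \<in> Y then f v else 0)"

definition coord_ring :: "nat \<Rightarrow> (nat \<Rightarrow> 'k) set \<Rightarrow> ((nat \<Rightarrow> 'k::comm_ring_1) \<Rightarrow> 'k) set" where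
  "coord_ring n Y = {restr Y p | p. p \<in> polyfun n}"

definition polymap :: "nat \<Rightarrow> (nat \<Rightarrow> (nat \<Rightarrow> 'k) \<Rightarrow> 'k::zero) \<Rightarrow> (nat \<Rightarrow> 'k) \<Rightarrow> nat \<Rightarrow> 'k" where
  "polymap m q v = (\<lambda>j. if j < m then q j v else 0)"

definition gen_subalg :: "nat \<Rightarrow> (nat \<Rightarrow> 'k) set \<Rightarrow> nat \<Rightarrow> (nat \<Rightarrow> (nat \<Rightarrow> 'k) \<Rightarrow> 'k)
    \<Rightarrow> ((nat \<Rightarrow> 'k::comm_ring_1) \<Rightarrow> 'k) set" where
  "gen_subalg n Y m q = {restr Y (\<lambda>v. g (polymap m q v)) | g. g \<in> polyfun m}"

definition integral_over :: "(nat \<Rightarrow> 'k) set \<Rightarrow> ((nat \<Rightarrow> 'k) \<Rightarrow> 'k) set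
    \<Rightarrow> ((nat \<Rightarrow> 'k::comm_ring_1) \<Rightarrow> 'k) set \<Rightarrow> bool" where
  "integral_over Y R A \<longleftrightarrow> (\<forall>r\<in>R. \<exists>d c. (\<forall>j<d. c j \<in> A) \<and>
      (\<forall>v\<in>Y. r v ^ d + (\<Sum>j<d. c j v * r v ^ j) = 0))"

text \<open>Chains of degree p: M \<otimes> \<wedge>^p k^n, identified with functions from p-subsets
  S of {0..<n} (basis e_S, indices in increasing order) to M.\<close>
definition kchains :: "'m set \<Rightarrow> nat \<Rightarrow> nat \<Rightarrow> (nat set \<Rightarrow> 'm::zero) set" where
  "kchains M n p = {c. (\<forall>S. c S \<in> M) \<and> (\<forall>S. \<not> (S \<subseteq> {..<n} \<and> card S = p) \<longrightarrow> c S = 0)}"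

text \<open>Differential: the coefficient of e_S in d(c) is the sum over i not in S of
  (-1)^(s+1) y_i c(S+i), where s is the (1-based) position of i in S+i,
  so (-1)^(s+1) = (-1)^(number of j in S with j < i).\<close>
definition kd :: "('r \<Rightarrow> 'm \<Rightarrow> 'm) \<Rightarrow> (nat \<Rightarrow> 'r) \<Rightarrow> nat \<Rightarrow> (nat set \<Rightarrow> 'm::ab_group_add)
    \<Rightarrow> nat set \<Rightarrow> 'm" where
  "kd smul y n c = (\<lambda>S. if S \<subseteq> {..<n} then
      (\<Sum>i\<in>{..<n} - S. (if even (card {j\<in>S. j < i}) then smul (y i) (c (insert i S))
                           else - smul (y i) (c (insert i S))))
    else 0)"

definition koszul_cycles :: "'m set \<Rightarrow> ('r \<Rightarrow> 'm \<Rightarrow> 'm) \<Rightarrow> (nat \<Rightarrow> 'r) \<Rightarrow> nat \<Rightarrow> nat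
    \<Rightarrow> (nat set \<Rightarrow> 'm::ab_group_add) set" where
  "koszul_cycles M smul y n p = {c \<in> kchains M n p. kd smul y n c = (\<lambda>_. 0)}"

definition koszul_boundaries :: "'m set \<Rightarrow> ('r \<Rightarrow> 'm \<Rightarrow> 'm) \<Rightarrow> (nat \<Rightarrow> 'r) \<Rightarrow> nat \<Rightarrow> nat
    \<Rightarrow> (nat set \<Rightarrow> 'm::ab_group_add) set" where
  "koszul_boundaries M smul y n p = kd smul y n ` kchains M n (Suc p)"

definition koszul_homology_nonzero :: "'m::ab_group_add set \<Rightarrow> ('r \<Rightarrow> 'm \<Rightarrow> 'm) \<Rightarrow> (nat \<Rightarrow> 'r) \<Rightarrow> nat \<Rightarrow> nat
    \<Rightarrow> bool" where
  "koszul_homology_nonzero M smul y n p \<longleftrightarrow>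
     koszul_cycles M smul y n p \<noteq> koszul_boundaries M smul y n p"

definition koszul_exact :: "'m::ab_group_add set \<Rightarrow> ('r \<Rightarrow> 'm \<Rightarrow> 'm) \<Rightarrow> (nat \<Rightarrow> 'r) \<Rightarrow> nat \<Rightarrow> bool" where
  "koszul_exact M smul y n \<longleftrightarrow> (\<forall>p\<le>n. \<not> koszul_homology_nonzero M smul y n p)"

definition taylor_spectrum :: "'m::ab_group_add set \<Rightarrow> ('r::ab_group_add \<Rightarrow> 'm \<Rightarrow> 'm)
    \<Rightarrow> ('k::zero \<Rightarrow> 'r) \<Rightarrow> (nat \<Rightarrow> 'r) \<Rightarrow> nat \<Rightarrow> (nat \<Rightarrow> 'k) set" where
  "taylor_spectrum M smul alg y n =
     {a \<in> kspace n. \<not> koszul_exact M smul (\<lambda>i. y i - alg (a i)) n}"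

definition point_spectrum :: "'m::ab_group_add set \<Rightarrow> ('r::ab_group_add \<Rightarrow> 'm \<Rightarrow> 'm)
    \<Rightarrow> ('k::zero \<Rightarrow> 'r) \<Rightarrow> (nat \<Rightarrow> 'r) \<Rightarrow> nat \<Rightarrow> (nat \<Rightarrow> 'k) set" where
  "point_spectrum M smul alg y n =
     {a \<in> kspace n. koszul_homology_nonzero M smul (\<lambda>i. y i - alg (a i)) n n}"

end

theory Submission
  imports Defs "HOL-Library.FuncSet"
begin

text \<open>Write y = q(x) - a. If the ideal of R generated by y is the unit ideal, a relation
  sum g_i y_i = 1 yields the contracting homotopy c |-> sum g_i e_i /\ c of Kos(y, R), so the
  complex is exact. Otherwise the ideal is proper. Integrality of R over k[q(x)] gives for every
  coordinate x_k a monic equation whose coefficients are constant modulo (y); splitting it over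
  the algebraically closed k, the proper ideal can be enlarged coordinate by coordinate to a
  proper ideal containing all x_k - b_k, and then b is a point of Y with q(b) = a, so H_0 is
  nonzero.

  The top homology H_m(y, R) is the annihilator of (y) in R. A nonzero annihilator is supported
  in the fibre of q over a, which is finite by the same monic equations, and a function on Y with
  finite nonempty support exhibits the points of its support as isolated. Conversely a polynomial
  vanishing on Y - {b} but not at b is annihilated by y when q(b) = a. The statement about the
  point spectrum of x itself is the case q = x.\<close>

section \<open>Polynomial functions and the coordinate ring\<close>

lemma sum_fun_apply: "(sum f A) x = (\<Sum>a\<in>A. f a x)"
  by (induction A rule: infinite_finite_induct) auto

lemma polyfun_uminus: "f \<in> polyfun n \<Longrightarrow> (\<lambda>v. - f v) \<in> polyfun n"
  using polyfun.mult[OF polyfun.const[of "-1"]] by simp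

lemma polyfun_diff: "f \<in> polyfun n \<Longrightarrow> g \<in> polyfun n \<Longrightarrow> (\<lambda>v. f v - g v) \<in> polyfun n"
  using polyfun.add[OF _ polyfun_uminus] by (simp only: diff_conv_add_uminus) blast

lemma polyfun_prod_list:
  "(\<And>b. b \<in> set bs \<Longrightarrow> f b \<in> polyfun n) \<Longrightarrow> (\<lambda>v. \<Prod>b\<leftarrow>bs. f b v) \<in> polyfun n"
  by (induction bs) (auto intro: polyfun.intros)

lemma polyfun_power: "f \<in> polyfun n \<Longrightarrow> (\<lambda>v. f v ^ d) \<in> polyfun n"
  by (induction d) (auto intro: polyfun.intros)

lemma polyfun_compose:
  assumes "g \<in> polyfun m" "\<And>i. i < m \<Longrightarrow> (\<lambda>v. \<phi> v i) \<in> polyfun n"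
  shows "(\<lambda>v. g (\<phi> v)) \<in> polyfun n"
  using assms(1) by induction (auto intro: polyfun.intros assms(2))

lemma polymap_component: "j < m \<Longrightarrow> polymap m q v j = q j v"
  by (simp add: polymap_def)

lemma polymap_in_kspace: "polymap m q v \<in> kspace m"
  by (simp add: kspace_def polymap_def)

lemma polymap_coordinates: "v \<in> kspace n \<Longrightarrow> polymap n (\<lambda>i v. v i) v = v"
  by (auto simp: polymap_def kspace_def)

lemma algebraic_set_subset_kspace: "algebraic_set n Y \<Longrightarrow> Y \<subseteq> kspace n"
  by (auto simp: algebraic_set_def zero_set_def)

lemma restr_in_coord_ring: "p \<in> polyfun n \<Longrightarrow> restr Y p \<in> coord_ring n Y"
  unfolding coord_ring_def by blast

lemma bex_coord_ring_iff: "(\<exists>u\<in>coord_ring n Y. P u) \<longleftrightarrow> (\<exists>p\<in>polyfun n. P (restr Y p))"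
  unfolding coord_ring_def by blast

lemma coord_ring_vanishes_outside: "u \<in> coord_ring n Y \<Longrightarrow> v \<notin> Y \<Longrightarrow> u v = 0"
  unfolding coord_ring_def restr_def by auto

lemma coord_ring_restr_op:
  assumes "\<And>p r. p \<in> polyfun n \<Longrightarrow> r \<in> polyfun n \<Longrightarrow> (\<lambda>v. h (p v) (r v)) \<in> polyfun n"
    and "h 0 0 = 0" "f \<in> coord_ring n Y" "g \<in> coord_ring n Y"
  shows "(\<lambda>v. h (f v) (g v)) \<in> coord_ring n Y"
proof -
  obtain p r where "p \<in> polyfun n" "f = restr Y p" "r \<in> polyfun n" "g = restr Y r"
    using assms(3,4) unfolding coord_ring_def by blast
  moreover have "(\<lambda>v. h (restr Y p v) (restr Y r v)) = restr Y (\<lambda>v. h (p v) (r v))"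
    using assms(2) by (auto simp: restr_def)
  ultimately show ?thesis using assms(1) restr_in_coord_ring by metis
qed

lemma coord_ring_zero: "(0 :: _ \<Rightarrow> 'k::comm_ring_1) \<in> coord_ring n Y"
  using restr_in_coord_ring[OF polyfun.const[of 0]] by (simp add: restr_def zero_fun_def)

lemma coord_ring_add: "f \<in> coord_ring n Y \<Longrightarrow> g \<in> coord_ring n Y \<Longrightarrow> f + g \<in> coord_ring n Y"
  unfolding plus_fun_def by (rule coord_ring_restr_op[where h="(+)"]) (auto intro: polyfun.add)

lemma coord_ring_mult:
  "f \<in> coord_ring n Y \<Longrightarrow> g \<in> coord_ring n Y \<Longrightarrow> (\<lambda>v. f v * g v) \<in> coord_ring n Y"
  by (rule coord_ring_restr_op[where h="(*)"]) (auto intro: polyfun.mult)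

lemma coord_ring_diff:
  "f \<in> coord_ring n Y \<Longrightarrow> g \<in> coord_ring n Y \<Longrightarrow> f - g \<in> coord_ring n Y"
  unfolding fun_diff_def by (rule coord_ring_restr_op[where h="(-)"]) (auto intro: polyfun_diff)

lemma coord_ring_uminus: "f \<in> coord_ring n Y \<Longrightarrow> - f \<in> coord_ring n Y"
  using coord_ring_diff[OF coord_ring_zero] by simp

lemma coord_ring_const_mult: "u \<in> coord_ring n Y \<Longrightarrow> (\<lambda>v. s * u v) \<in> coord_ring n Y"
  by (rule coord_ring_restr_op[where h="\<lambda>_ b. s * b" and f=u and g=u]) (auto intro: polyfun.intros)

lemma coord_ring_sum:
  "(\<And>i. i \<in> A \<Longrightarrow> f i \<in> coord_ring n Y) \<Longrightarrow> sum f A \<in> coord_ring n Y"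
  by (induction A rule: infinite_finite_induct) (auto intro: coord_ring_zero coord_ring_add)

lemma integral_over_coordinates:
  assumes "algebraic_set n Y"
  shows "integral_over Y (coord_ring n Y) (gen_subalg n Y n (\<lambda>i v. v i))"
  unfolding integral_over_def
proof
  fix r assume "r \<in> coord_ring n Y"
  then obtain p where p: "p \<in> polyfun n" "r = restr Y p" unfolding coord_ring_def by blast
  have "restr Y (\<lambda>v. - p (polymap n (\<lambda>i v. v i) v)) = - r"
    using p(2) algebraic_set_subset_kspace[OF assms] by (auto simp: restr_def polymap_coordinates fun_eq_iff)
  then have "- r \<in> gen_subalg n Y n (\<lambda>i v. v i)"
    unfolding gen_subalg_def using polyfun_uminus[OF p(1)] by force
  then show "\<exists>d c. (\<forall>j<d. c j \<in> gen_subalg n Y n (\<lambda>i v. v i)) \<and>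
      (\<forall>v\<in>Y. r v ^ d + (\<Sum>j<d. c j v * r v ^ j) = 0)"
    by (intro exI[of _ 1] exI[of _ "\<lambda>_. - r"]) simp
qed

section \<open>The Koszul complex over a ring of functions\<close>

abbreviation (input) pointwise_mult :: "('v \<Rightarrow> 'k::times) \<Rightarrow> ('v \<Rightarrow> 'k) \<Rightarrow> 'v \<Rightarrow> 'k" where
  "pointwise_mult \<equiv> \<lambda>f g v. f v * g v"

text \<open>Since R acts on itself pointwise, evaluating a Koszul chain at a point v gives a chain of
  the Koszul complex of the scalars y(v) over k, whose differential is koszul_diff;
  koszul_homotopy g is exterior multiplication by sum g_i e_i.\<close>

definition koszul_sign :: "nat \<Rightarrow> nat set \<Rightarrow> 'k::comm_ring_1" where
  "koszul_sign i S = (-1) ^ card {j\<in>S. j < i}"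

definition koszul_diff :: "(nat \<Rightarrow> 'k::comm_ring_1) \<Rightarrow> nat \<Rightarrow> (nat set \<Rightarrow> 'k) \<Rightarrow> nat set \<Rightarrow> 'k" where
  "koszul_diff y m c S =
    (if S \<subseteq> {..<m} then (\<Sum>i\<in>{..<m} - S. koszul_sign i S * y i * c (insert i S)) else 0)"

definition koszul_homotopy :: "(nat \<Rightarrow> 'k::comm_ring_1) \<Rightarrow> nat \<Rightarrow> (nat set \<Rightarrow> 'k) \<Rightarrow> nat set \<Rightarrow> 'k" where
  "koszul_homotopy g m c S =
    (if S \<subseteq> {..<m} then (\<Sum>i\<in>S. koszul_sign i (S - {i}) * g i * c (S - {i})) else 0)"

lemma kd_eval: "kd pointwise_mult y m c S v = koszul_diff (\<lambda>i. y i v) m (\<lambda>T. c T v) S"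
  unfolding kd_def koszul_diff_def koszul_sign_def
  by (auto simp: sum_fun_apply intro!: sum.cong)

lemma koszul_sign_insert:
  assumes "finite S" "i \<notin> S"
  shows "koszul_sign j (insert i S)
    = (if i < j then - koszul_sign j S else (koszul_sign j S :: 'k::comm_ring_1))"
proof (cases "i < j")
  case True
  then have "{l\<in>insert i S. l < j} = insert i {l\<in>S. l < j}" by auto
  then show ?thesis using True assms by (simp add: koszul_sign_def)
next
  case False
  then have "{l\<in>insert i S. l < j} = {l\<in>S. l < j}" by auto
  then show ?thesis using False by (simp add: koszul_sign_def)
qed

lemma koszul_sign_square: "koszul_sign i S * koszul_sign i S = (1::'k::comm_ring_1)"
  by (simp add: koszul_sign_def flip: power_add)

lemma sum_offdiagonal_antisym_eq_0:
  fixes F :: "'a::linorder \<Rightarrow> 'a \<Rightarrow> 'b::ab_group_add"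
  assumes "finite A" "\<And>i j. i \<in> A \<Longrightarrow> j \<in> A \<Longrightarrow> i \<noteq> j \<Longrightarrow> F j i = - F i j"
  shows "(\<Sum>i\<in>A. \<Sum>j\<in>A - {i}. F i j) = 0"
proof -
  define L where "L = (\<Sum>i\<in>A. \<Sum>j\<in>A. if j < i then F i j else 0)"
  have "(\<Sum>i\<in>A. \<Sum>j\<in>A - {i}. F i j)
      = (\<Sum>i\<in>A. \<Sum>j\<in>A. (if j < i then F i j else 0) + (if i < j then F i j else 0))"
  proof (rule sum.cong[OF refl])
    fix i assume "i \<in> A"
    have "(\<Sum>j\<in>A - {i}. F i j) = (\<Sum>j\<in>A. if j \<noteq> i then F i j else 0)"
    proof -
      have "A - {i} = {j\<in>A. j \<noteq> i}" by auto
      then show ?thesis by (simp add: sum.inter_filter assms(1))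
    qed
    also have "\<dots> = (\<Sum>j\<in>A. (if j < i then F i j else 0) + (if i < j then F i j else 0))"
      by (rule sum.cong) auto
    finally show "(\<Sum>j\<in>A - {i}. F i j) = \<dots>" .
  qed
  also have "\<dots> = L + (\<Sum>i\<in>A. \<Sum>j\<in>A. if i < j then F i j else 0)"
    by (simp add: sum.distrib L_def)
  also have "(\<Sum>i\<in>A. \<Sum>j\<in>A. if i < j then F i j else 0) = (\<Sum>j\<in>A. \<Sum>i\<in>A. if i < j then F i j else 0)"
    by (rule sum.swap)
  also have "(\<Sum>j\<in>A. \<Sum>i\<in>A. if i < j then F i j else 0) = (\<Sum>i\<in>A. \<Sum>j\<in>A. - (if j < i then F i j else 0))"
  proof (intro sum.cong refl)
    fix i j assume "i \<in> A" "j \<in> A"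
    then show "(if j < i then F j i else 0) = - (if j < i then F i j else 0)"
      using assms(2)[of i j] by auto
  qed
  also have "\<dots> = - L"
    by (simp add: L_def sum_negf)
  finally show ?thesis by simp
qed

lemma koszul_sign_exchange:
  assumes "finite S" "i \<notin> S" "j \<in> S"
  shows "koszul_sign i S * koszul_sign j (insert i S - {j})
    = - (koszul_sign j (S - {j}) * koszul_sign i (S - {j}) :: 'k::comm_ring_1)"
proof -
  have fT: "finite (S - {j})" and ij: "i \<noteq> j" using assms by auto
  have "S = insert j (S - {j})" using assms(3) by blast
  then have "koszul_sign i S = (if j < i then - koszul_sign i (S - {j}) else (koszul_sign i (S - {j}) :: 'k))"
    using koszul_sign_insert[OF fT, of j i] by simp
  moreover have "insert i S - {j} = insert i (S - {j})" using ij by blast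
  then have "koszul_sign j (insert i S - {j})
      = (if i < j then - koszul_sign j (S - {j}) else (koszul_sign j (S - {j}) :: 'k))"
    using koszul_sign_insert[OF fT, of i j] assms(2) by simp
  ultimately show ?thesis using ij by (cases "i < j") (simp_all add: mult_ac)
qed

lemma koszul_diff_diff: "koszul_diff y m (koszul_diff y m c) S = 0"
proof (cases "S \<subseteq> {..<m}")
  case False then show ?thesis by (simp add: koszul_diff_def)
next
  case True
  have fS: "finite S" using True finite_subset by blast
  define A where "A = {..<m} - S"
  define F where "F i j = koszul_sign i S * koszul_sign j (insert i S) * y i * y j
      * c (insert j (insert i S))" for i j
  have "koszul_diff y m (koszul_diff y m c) S
      = (\<Sum>i\<in>A. koszul_sign i S * y i * koszul_diff y m c (insert i S))"
    using True by (simp add: koszul_diff_def A_def)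
  also have "\<dots> = (\<Sum>i\<in>A. koszul_sign i S * y i
      * (\<Sum>j\<in>A - {i}. koszul_sign j (insert i S) * y j * c (insert j (insert i S))))"
  proof (rule sum.cong[OF refl])
    fix i assume "i \<in> A"
    then have "insert i S \<subseteq> {..<m}" "{..<m} - insert i S = A - {i}"
      using True by (auto simp: A_def)
    then show "koszul_sign i S * y i * koszul_diff y m c (insert i S) = koszul_sign i S * y i
        * (\<Sum>j\<in>A - {i}. koszul_sign j (insert i S) * y j * c (insert j (insert i S)))"
      by (simp add: koszul_diff_def)
  qed
  also have "\<dots> = (\<Sum>i\<in>A. \<Sum>j\<in>A - {i}. F i j)"
    by (simp add: F_def sum_distrib_left mult_ac)
  also have "\<dots> = 0"
  proof (rule sum_offdiagonal_antisym_eq_0)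
    show "finite A" by (simp add: A_def)
    fix i j assume ij: "i \<in> A" "j \<in> A" "i \<noteq> j"
    then have "i \<notin> S" "j \<notin> S" by (auto simp: A_def)
    moreover have "insert i (insert j S) = insert j (insert i S)" by blast
    ultimately show "F j i = - F i j"
      using ij(3) unfolding F_def
      by (cases "i < j") (simp_all add: koszul_sign_insert[OF fS] mult_ac)
  qed
  finally show ?thesis .
qed

lemma koszul_diff_homotopy_expand:
  assumes "S \<subseteq> {..<m}"
  shows "koszul_diff y m (koszul_homotopy g m c) S = (\<Sum>i\<in>{..<m} - S. y i * g i * c S
      + (\<Sum>j\<in>S. koszul_sign i S * koszul_sign j (insert i S - {j}) * y i * g j * c (insert i (S - {j}))))"
  unfolding koszul_diff_def if_P[OF assms]
proof (rule sum.cong[OF refl])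
  fix i assume i: "i \<in> {..<m} - S"
  then have iS: "i \<notin> S" and iN: "insert i S \<subseteq> {..<m}" using assms by auto
  have fS: "finite S" using assms finite_subset by blast
  have "koszul_homotopy g m c (insert i S) = koszul_sign i S * g i * c S
      + (\<Sum>j\<in>S. koszul_sign j (insert i S - {j}) * g j * c (insert i S - {j}))"
    using iN fS iS by (simp add: koszul_homotopy_def)
  moreover have "\<And>j. j \<in> S \<Longrightarrow> insert i S - {j} = insert i (S - {j})" using iS by blast
  ultimately show "koszul_sign i S * y i * koszul_homotopy g m c (insert i S) = y i * g i * c S
      + (\<Sum>j\<in>S. koszul_sign i S * koszul_sign j (insert i S - {j}) * y i * g j * c (insert i (S - {j})))"
    by (simp add: algebra_simps sum_distrib_left koszul_sign_square cong: sum.cong)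
qed

lemma koszul_homotopy_diff_expand:
  assumes "S \<subseteq> {..<m}"
  shows "koszul_homotopy g m (koszul_diff y m c) S = (\<Sum>j\<in>S. g j * y j * c S
      + (\<Sum>i\<in>{..<m} - S. koszul_sign j (S - {j}) * koszul_sign i (S - {j}) * g j * y i * c (insert i (S - {j}))))"
  unfolding koszul_homotopy_def if_P[OF assms]
proof (rule sum.cong[OF refl])
  fix j assume j: "j \<in> S"
  have "{..<m} - (S - {j}) = insert j ({..<m} - S)" "j \<notin> {..<m} - S" using assms j by auto
  then have "koszul_diff y m c (S - {j}) = koszul_sign j (S - {j}) * y j * c S
      + (\<Sum>i\<in>{..<m} - S. koszul_sign i (S - {j}) * y i * c (insert i (S - {j})))"
    using assms j by (simp add: koszul_diff_def insert_absorb subset_iff)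
  then show "koszul_sign j (S - {j}) * g j * koszul_diff y m c (S - {j}) = g j * y j * c S
      + (\<Sum>i\<in>{..<m} - S. koszul_sign j (S - {j}) * koszul_sign i (S - {j}) * g j * y i * c (insert i (S - {j})))"
    by (simp add: algebra_simps sum_distrib_left)
       (simp add: mult.assoc[symmetric] koszul_sign_square mult.commute[of "koszul_sign j (S - {j})"])
qed

lemma koszul_diff_homotopy:
  assumes "S \<subseteq> {..<m}"
  shows "koszul_diff y m (koszul_homotopy g m c) S + koszul_homotopy g m (koszul_diff y m c) S
      = (\<Sum>i<m. g i * y i) * c S"
proof -
  have fS: "finite S" using assms finite_subset by blast
  define A where "A = {..<m} - S"
  define X where "X i j = koszul_sign i S * koszul_sign j (insert i S - {j}) * y i * g j
      * c (insert i (S - {j}))" for i j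
  define Z where "Z j i = koszul_sign j (S - {j}) * koszul_sign i (S - {j}) * g j * y i
      * c (insert i (S - {j}))" for j i
  have cross_terms_cancel: "X i j = - Z j i" if "i \<in> A" "j \<in> S" for i j
  proof -
    have "i \<notin> S" using that(1) by (simp add: A_def)
    have "X i j = (koszul_sign i S * koszul_sign j (insert i S - {j})) * (y i * g j * c (insert i (S - {j})))"
      by (simp add: X_def mult_ac)
    also have "\<dots> = - (koszul_sign j (S - {j}) * koszul_sign i (S - {j})) * (y i * g j * c (insert i (S - {j})))"
      by (simp only: koszul_sign_exchange[OF fS \<open>i \<notin> S\<close> that(2)])
    also have "\<dots> = - Z j i" by (simp add: Z_def mult_ac)
    finally show ?thesis .
  qed
  have "koszul_diff y m (koszul_homotopy g m c) S + koszul_homotopy g m (koszul_diff y m c) S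
      = ((\<Sum>i\<in>A. g i * y i * c S) + (\<Sum>j\<in>S. g j * y j * c S))
        + ((\<Sum>i\<in>A. \<Sum>j\<in>S. X i j) + (\<Sum>j\<in>S. \<Sum>i\<in>A. Z j i))"
    unfolding koszul_diff_homotopy_expand[OF assms] koszul_homotopy_diff_expand[OF assms]
    by (simp add: sum.distrib mult_ac A_def X_def Z_def)
  also have "(\<Sum>i\<in>A. \<Sum>j\<in>S. X i j) + (\<Sum>j\<in>S. \<Sum>i\<in>A. Z j i) = 0"
  proof -
    have "(\<Sum>j\<in>S. \<Sum>i\<in>A. Z j i) = (\<Sum>i\<in>A. \<Sum>j\<in>S. Z j i)" by (rule sum.swap)
    then show ?thesis by (simp add: cross_terms_cancel sum_negf)
  qed
  also have "(\<Sum>i\<in>A. g i * y i * c S) + (\<Sum>j\<in>S. g j * y j * c S) = (\<Sum>i\<in>A \<union> S. g i * y i * c S)"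
    by (rule sum.union_disjoint[symmetric]) (auto simp: fS A_def)
  also have "A \<union> S = {..<m}" using assms by (auto simp: A_def)
  finally show ?thesis by (simp add: sum_distrib_right)
qed

section \<open>Koszul homology of the coordinate ring\<close>

lemma kd_kchains:
  assumes y: "\<And>i. i < m \<Longrightarrow> y i \<in> coord_ring n Y"
    and c: "c \<in> kchains (coord_ring n Y) m (Suc p)"
  shows "kd pointwise_mult y m c \<in> kchains (coord_ring n Y) m p"
proof -
  have cS: "c S \<in> coord_ring n Y" for S using c by (simp add: kchains_def)
  have "kd pointwise_mult y m c S \<in> coord_ring n Y" for S
    unfolding kd_def
    by (auto intro!: coord_ring_sum coord_ring_mult coord_ring_uminus y cS coord_ring_zero)
  moreover have "kd pointwise_mult y m c S = 0" if "\<not> (S \<subseteq> {..<m} \<and> card S = p)" for S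
  proof (cases "S \<subseteq> {..<m}")
    case True
    then have "c (insert i S) = 0" if "i \<in> {..<m} - S" for i
      using c that \<open>\<not> (S \<subseteq> {..<m} \<and> card S = p)\<close> finite_subset[OF True]
      by (simp add: kchains_def)
    then show ?thesis using True by (simp add: kd_eval koszul_diff_def fun_eq_iff)
  qed (simp add: kd_eval koszul_diff_def fun_eq_iff)
  ultimately show ?thesis by (simp add: kchains_def)
qed

lemma kd_kd:
  fixes y :: "nat \<Rightarrow> 'v \<Rightarrow> 'k::comm_ring_1"
  shows "kd pointwise_mult y m (kd pointwise_mult y m c) = (\<lambda>_. 0)"
proof (intro ext)
  fix S v
  have "(\<lambda>T. kd pointwise_mult y m c T v) = koszul_diff (\<lambda>i. y i v) m (\<lambda>T. c T v)"
    by (simp add: kd_eval fun_eq_iff)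
  then show "kd pointwise_mult y m (kd pointwise_mult y m c) S v = (\<lambda>_. 0) S v"
    by (simp add: kd_eval koszul_diff_diff)
qed

lemma koszul_boundaries_subset_cycles:
  assumes "\<And>i. i < m \<Longrightarrow> y i \<in> coord_ring n Y"
  shows "koszul_boundaries (coord_ring n Y) pointwise_mult y m p
    \<subseteq> koszul_cycles (coord_ring n Y) pointwise_mult y m p"
  unfolding koszul_boundaries_def koszul_cycles_def
  using kd_kchains[of m y, OF assms] kd_kd by blast

lemma koszul_homotopy_kchains:
  assumes g: "\<And>i. i < m \<Longrightarrow> g i \<in> coord_ring n Y"
    and c: "c \<in> kchains (coord_ring n Y) m p"
  shows "(\<lambda>S v. koszul_homotopy (\<lambda>i. g i v) m (\<lambda>T. c T v) S) \<in> kchains (coord_ring n Y) m (Suc p)"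
proof -
  have cS: "c S \<in> coord_ring n Y" for S using c by (simp add: kchains_def)
  have eq: "(\<lambda>v. koszul_homotopy (\<lambda>i. g i v) m (\<lambda>T. c T v) S) = (if S \<subseteq> {..<m} then
      (\<Sum>i\<in>S. (\<lambda>v. koszul_sign i (S - {i}) * (g i v * c (S - {i}) v))) else 0)" for S
    by (simp add: koszul_homotopy_def sum_fun_apply mult_ac fun_eq_iff)
  have "(\<lambda>v. koszul_homotopy (\<lambda>i. g i v) m (\<lambda>T. c T v) S) \<in> coord_ring n Y" for S
    unfolding eq using g
    by (auto intro!: coord_ring_sum coord_ring_const_mult coord_ring_mult cS coord_ring_zero)
  moreover have "(\<lambda>v. koszul_homotopy (\<lambda>i. g i v) m (\<lambda>T. c T v) S) = 0"
    if S: "\<not> (S \<subseteq> {..<m} \<and> card S = Suc p)" for S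
  proof (cases "S \<subseteq> {..<m}")
    case True
    then have "card S \<noteq> Suc p" "finite S" using S finite_subset by auto
    then have "card (S - {i}) \<noteq> p" if "i \<in> S" for i
      using card.remove[OF \<open>finite S\<close> that] by simp
    then have "c (S - {i}) = 0" if "i \<in> S" for i
      using c that by (simp add: kchains_def)
    then show ?thesis unfolding eq using True by (auto intro!: sum.neutral simp: fun_eq_iff)
  qed (simp add: eq)
  ultimately show ?thesis by (simp add: kchains_def)
qed

lemma koszul_exact_if_unit_ideal:
  assumes y: "\<And>i. i < m \<Longrightarrow> y i \<in> coord_ring n Y"
    and g: "\<And>i. i < m \<Longrightarrow> g i \<in> coord_ring n Y"
    and unit: "\<And>v. v \<in> Y \<Longrightarrow> (\<Sum>i<m. g i v * y i v) = 1"
  shows "koszul_exact (coord_ring n Y) pointwise_mult y m"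
proof -
  let ?M = "coord_ring n Y"
  have "koszul_cycles ?M pointwise_mult y m p \<subseteq> koszul_boundaries ?M pointwise_mult y m p" for p
  proof
    fix c assume "c \<in> koszul_cycles ?M pointwise_mult y m p"
    then have c: "c \<in> kchains ?M m p" and cycle: "kd pointwise_mult y m c = (\<lambda>_. 0)"
      by (auto simp: koszul_cycles_def)
    define b where "b S v = koszul_homotopy (\<lambda>i. g i v) m (\<lambda>T. c T v) S" for S v
    have "kd pointwise_mult y m b S v = c S v" for S v
    proof (cases "S \<subseteq> {..<m}")
      case True
      have "koszul_diff (\<lambda>i. y i v) m (\<lambda>T. c T v) = (\<lambda>_. 0)"
        using cycle by (simp add: kd_eval fun_eq_iff)
      moreover have "koszul_homotopy (\<lambda>i. g i v) m (\<lambda>_. 0) S = 0"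
        by (simp add: koszul_homotopy_def)
      ultimately have "kd pointwise_mult y m b S v = (\<Sum>i<m. g i v * y i v) * c S v"
        using koszul_diff_homotopy[OF True, of "\<lambda>i. y i v" "\<lambda>i. g i v" "\<lambda>T. c T v"]
        by (simp add: kd_eval b_def)
      also have "\<dots> = c S v"
        using unit c coord_ring_vanishes_outside[of "c S" n Y v] by (cases "v \<in> Y") (auto simp: kchains_def)
      finally show ?thesis .
    next
      case False
      then show ?thesis using c by (simp add: kd_eval koszul_diff_def kchains_def)
    qed
    then have "c = kd pointwise_mult y m b" by (simp add: fun_eq_iff)
    moreover have "b \<in> kchains ?M m (Suc p)"
      unfolding b_def by (rule koszul_homotopy_kchains[OF g c])
    ultimately show "c \<in> koszul_boundaries ?M pointwise_mult y m p"
      unfolding koszul_boundaries_def by (rule image_eqI)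
  qed
  then show ?thesis
    using koszul_boundaries_subset_cycles[of m y, OF y]
    unfolding koszul_exact_def koszul_homology_nonzero_def by (blast intro: subset_antisym)
qed

lemma koszul_boundaries_top:
  "koszul_boundaries (coord_ring n Y) pointwise_mult y m m = {\<lambda>_. (0 :: _ \<Rightarrow> 'k::comm_ring_1)}"
proof -
  have "S \<subseteq> {..<m} \<Longrightarrow> card S \<noteq> Suc m" for S :: "nat set"
    using card_mono[of "{..<m}" S] by auto
  then have "kchains (coord_ring n Y) m (Suc m) = {\<lambda>_. 0}"
    by (auto simp: kchains_def coord_ring_zero)
  moreover have "kd pointwise_mult y m (\<lambda>_. 0) = (\<lambda>_. (0 :: _ \<Rightarrow> 'k))"
    by (simp add: kd_eval koszul_diff_def fun_eq_iff)
  ultimately show ?thesis by (simp add: koszul_boundaries_def fun_eq_iff)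
qed

lemma kchains_top:
  "kchains (coord_ring n Y) m m = (\<lambda>u S v. if S = {..<m} then u v else 0) ` coord_ring n Y"
proof -
  have "S = {..<m}" if "S \<subseteq> {..<m}" "card S = m" for S
    using card_subset_eq[OF finite_lessThan that(1)] that(2) by simp
  then have chain_eq: "c = (\<lambda>S v. if S = {..<m} then c {..<m} v else 0)" if "c \<in> kchains (coord_ring n Y) m m" for c
    using that by (auto simp: kchains_def fun_eq_iff)
  have top_chain: "(\<lambda>S v. if S = {..<m} then u v else 0) \<in> kchains (coord_ring n Y) m m"
    if "u \<in> coord_ring n Y" for u
  proof -
    have "(\<lambda>v. if S = {..<m} then u v else 0) = (if S = {..<m} then u else 0)" for S
      by auto
    then show ?thesis using that by (simp add: kchains_def coord_ring_zero)
  qed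
  show ?thesis
  proof (intro set_eqI iffI)
    fix c assume "c \<in> kchains (coord_ring n Y) m m"
    moreover have "c {..<m} \<in> coord_ring n Y" using calculation by (simp add: kchains_def)
    ultimately show "c \<in> (\<lambda>u S v. if S = {..<m} then u v else 0) ` coord_ring n Y"
      using chain_eq by (intro image_eqI[of c _ "c {..<m}"]) auto
  qed (auto intro: top_chain)
qed

lemma kd_top_eq_0_iff:
  "kd pointwise_mult y m (\<lambda>S v. if S = {..<m} then u v else 0) = (\<lambda>_. 0)
    \<longleftrightarrow> (\<forall>i<m. \<forall>v. y i v * u v = (0 :: 'k::comm_ring_1))"
proof
  assume cycle: "kd pointwise_mult y m (\<lambda>S v. if S = {..<m} then u v else 0) = (\<lambda>_. 0)"
  have top: "koszul_diff (\<lambda>i. y i v) m (\<lambda>T. if T = {..<m} then u v else 0) S = 0" for S v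
    using fun_cong[OF fun_cong[OF cycle, of S], of v] by (simp add: kd_eval)
  show "\<forall>i<m. \<forall>v. y i v * u v = 0"
  proof (intro allI impI)
    fix i v assume i: "i < m"
    have "{..<m} - ({..<m} - {i}) = {i}" "insert i ({..<m} - {i}) = {..<m}" using i by auto
    then have "koszul_sign i ({..<m} - {i}) * (y i v * u v) = 0"
      using top[of v "{..<m} - {i}"] by (simp add: koszul_diff_def mult.assoc)
    then show "y i v * u v = 0"
      by (metis koszul_sign_square mult.assoc mult_1 mult_zero_right)
  qed
next
  assume ann: "\<forall>i<m. \<forall>v. y i v * u v = 0"
  show "kd pointwise_mult y m (\<lambda>S v. if S = {..<m} then u v else 0) = (\<lambda>_. 0)"
  proof (intro ext)
    fix S v
    have "\<forall>i\<in>{..<m} - S. koszul_sign i S * y i v * (if insert i S = {..<m} then u v else 0) = 0"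
      using ann by (simp add: mult.assoc)
    then show "kd pointwise_mult y m (\<lambda>S v. if S = {..<m} then u v else 0) S v = (\<lambda>_. 0) S v"
      by (simp add: kd_eval koszul_diff_def)
  qed
qed

lemma koszul_homology_top_nonzero_iff:
  "koszul_homology_nonzero (coord_ring n Y) pointwise_mult y m m
    \<longleftrightarrow> (\<exists>u\<in>coord_ring n Y. u \<noteq> 0 \<and> (\<forall>i<m. \<forall>v. y i v * u v = (0 :: 'k::comm_ring_1)))"
proof -
  let ?top = "\<lambda>u S v. if S = {..<m} then u v else (0::'k)"
  let ?A = "{u \<in> coord_ring n Y. \<forall>i<m. \<forall>v. y i v * u v = 0}"
  have cycles: "koszul_cycles (coord_ring n Y) pointwise_mult y m m = ?top ` ?A"
    by (auto simp: koszul_cycles_def kchains_top kd_top_eq_0_iff)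
  have top_eq_0: "?top u = (\<lambda>_. 0) \<longleftrightarrow> u = 0" for u
    by (auto simp: fun_eq_iff dest: spec[of _ "{..<m}"])
  have "0 \<in> ?A" by (simp add: coord_ring_zero)
  show ?thesis
    unfolding koszul_homology_nonzero_def koszul_boundaries_top cycles
  proof
    assume nonzero: "?top ` ?A \<noteq> {\<lambda>_. 0}"
    show "\<exists>u\<in>coord_ring n Y. u \<noteq> 0 \<and> (\<forall>i<m. \<forall>v. y i v * u v = 0)"
    proof (rule ccontr)
      assume "\<not> ?thesis"
      then have "?A = {0}" using \<open>0 \<in> ?A\<close> by blast
      then show False using nonzero by (simp add: fun_eq_iff zero_fun_def)
    qed
  next
    assume "\<exists>u\<in>coord_ring n Y. u \<noteq> 0 \<and> (\<forall>i<m. \<forall>v. y i v * u v = 0)"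
    then obtain u where "u \<in> ?A" "u \<noteq> 0" by blast
    then show "?top ` ?A \<noteq> {\<lambda>_. 0}" using top_eq_0 by blast
  qed
qed

lemma koszul_homology_zero_nonzero_if_common_zero:
  assumes "v0 \<in> Y" "\<And>i. i < m \<Longrightarrow> y i v0 = (0 :: 'k::comm_ring_1)"
  shows "koszul_homology_nonzero (coord_ring n Y) pointwise_mult y m 0"
proof -
  define c where "c S = (if S = {} then restr Y (\<lambda>_. 1 :: 'k) else 0)" for S :: "nat set"
  have "c S \<in> coord_ring n Y" for S
    by (simp add: c_def restr_in_coord_ring polyfun.const coord_ring_zero)
  then have "c \<in> kchains (coord_ring n Y) m 0"
    by (simp add: kchains_def c_def)
  moreover have "kd pointwise_mult y m c = (\<lambda>_. 0)"
    by (auto simp: kd_eval koszul_diff_def c_def fun_eq_iff intro!: sum.neutral)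
  ultimately have "c \<in> koszul_cycles (coord_ring n Y) pointwise_mult y m 0"
    by (simp add: koszul_cycles_def)
  moreover have "c \<notin> koszul_boundaries (coord_ring n Y) pointwise_mult y m 0"
  proof
    assume "c \<in> koszul_boundaries (coord_ring n Y) pointwise_mult y m 0"
    then obtain b where "c = kd pointwise_mult y m b" by (auto simp: koszul_boundaries_def)
    moreover have "kd pointwise_mult y m b {} v0 = 0"
      using assms(2) by (auto simp: kd_eval koszul_diff_def intro!: sum.neutral)
    ultimately have "c {} v0 = 0" by simp
    then show False using assms(1) by (simp add: c_def restr_def)
  qed
  ultimately show ?thesis unfolding koszul_homology_nonzero_def by blast
qed

section \<open>Ideals of the coordinate ring\<close>

text \<open>The ideal of R generated by G, elements of R being represented by functions on k^n
  that are identified when they agree on Y.\<close>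

inductive_set coord_ideal :: "nat \<Rightarrow> (nat \<Rightarrow> 'k) set \<Rightarrow> ((nat \<Rightarrow> 'k) \<Rightarrow> 'k) set
    \<Rightarrow> ((nat \<Rightarrow> 'k::comm_ring_1) \<Rightarrow> 'k) set" for n Y G where
  gen: "g \<in> G \<Longrightarrow> g \<in> coord_ideal n Y G"
| zero: "(\<lambda>v. 0) \<in> coord_ideal n Y G"
| add: "f \<in> coord_ideal n Y G \<Longrightarrow> g \<in> coord_ideal n Y G \<Longrightarrow> (\<lambda>v. f v + g v) \<in> coord_ideal n Y G"
| mult: "p \<in> polyfun n \<Longrightarrow> f \<in> coord_ideal n Y G \<Longrightarrow> (\<lambda>v. p v * f v) \<in> coord_ideal n Y G"
| eq_on: "f \<in> coord_ideal n Y G \<Longrightarrow> (\<forall>v\<in>Y. h v = f v) \<Longrightarrow> h \<in> coord_ideal n Y G"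

lemma coord_ideal_mono: "f \<in> coord_ideal n Y G \<Longrightarrow> G \<subseteq> G' \<Longrightarrow> f \<in> coord_ideal n Y G'"
  by (induction rule: coord_ideal.induct) (auto intro: coord_ideal.intros)

lemma coord_ideal_insert_absorb:
  "f \<in> coord_ideal n Y (insert h G) \<Longrightarrow> h \<in> coord_ideal n Y G \<Longrightarrow> f \<in> coord_ideal n Y G"
  by (induction rule: coord_ideal.induct) (auto intro: coord_ideal.intros)

lemma coord_ideal_const_mult: "f \<in> coord_ideal n Y G \<Longrightarrow> (\<lambda>v. c * f v) \<in> coord_ideal n Y G"
  using coord_ideal.mult[OF polyfun.const] by blast

lemma coord_ideal_diff:
  "f \<in> coord_ideal n Y G \<Longrightarrow> g \<in> coord_ideal n Y G \<Longrightarrow> (\<lambda>v. f v - g v) \<in> coord_ideal n Y G"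
  using coord_ideal.add[OF _ coord_ideal_const_mult[of g n Y G "-1"]] by simp

lemma coord_ideal_sum:
  "(\<And>i. i \<in> A \<Longrightarrow> f i \<in> coord_ideal n Y G) \<Longrightarrow> (\<lambda>v. \<Sum>i\<in>A. f i v) \<in> coord_ideal n Y G"
  by (induction A rule: infinite_finite_induct) (auto intro: coord_ideal.intros)

lemma coord_ideal_vanishes:
  "f \<in> coord_ideal n Y G \<Longrightarrow> v \<in> Y \<Longrightarrow> (\<forall>g\<in>G. g v = 0) \<Longrightarrow> f v = 0"
  by (induction rule: coord_ideal.induct) auto

lemma one_in_coord_ideal_if_const:
  fixes c :: "'k::field"
  assumes "(\<lambda>v. c) \<in> coord_ideal n Y G" "c \<noteq> 0"
  shows "(\<lambda>v. 1) \<in> coord_ideal n Y G"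
  using coord_ideal_const_mult[OF assms(1), of "inverse c"] assms(2) by simp

lemma coord_ideal_insertE:
  assumes "f \<in> coord_ideal n Y (insert u G)"
  obtains s h where "s \<in> polyfun n" "h \<in> coord_ideal n Y G" "\<forall>v\<in>Y. f v = h v + s v * u v"
proof -
  have "\<exists>s\<in>polyfun n. \<exists>h\<in>coord_ideal n Y G. \<forall>v\<in>Y. f v = h v + s v * u v"
    using assms
  proof (induction rule: coord_ideal.induct)
    case (gen g)
    then consider "g = u" | "g \<in> G" by blast
    then show ?case
    proof cases
      case 1
      then show ?thesis
        by (intro bexI[of _ "\<lambda>v. 1"] bexI[of _ "\<lambda>v. 0"]) (auto intro: coord_ideal.intros polyfun.intros)
    next
      case 2
      then show ?thesis
        by (intro bexI[of _ "\<lambda>v. 0"] bexI[of _ g]) (auto intro: coord_ideal.intros polyfun.intros)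
    qed
  next
    case zero
    show ?case
      by (intro bexI[of _ "\<lambda>v. 0"] bexI[of _ "\<lambda>v. 0"]) (auto intro: coord_ideal.intros polyfun.intros)
  next
    case (add f g)
    then obtain s1 h1 s2 h2 where "s1 \<in> polyfun n" "h1 \<in> coord_ideal n Y G" "\<forall>v\<in>Y. f v = h1 v + s1 v * u v"
      "s2 \<in> polyfun n" "h2 \<in> coord_ideal n Y G" "\<forall>v\<in>Y. g v = h2 v + s2 v * u v" by blast
    then show ?case
      by (intro bexI[of _ "\<lambda>v. s1 v + s2 v"] bexI[of _ "\<lambda>v. h1 v + h2 v"])
         (auto intro: coord_ideal.intros polyfun.intros simp: algebra_simps)
  next
    case (mult p f)
    then obtain s h where "s \<in> polyfun n" "h \<in> coord_ideal n Y G" "\<forall>v\<in>Y. f v = h v + s v * u v"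
      by blast
    then show ?case using mult.hyps(1)
      by (intro bexI[of _ "\<lambda>v. p v * s v"] bexI[of _ "\<lambda>v. p v * h v"])
         (auto intro: coord_ideal.intros polyfun.intros simp: algebra_simps)
  next
    case (eq_on f h)
    then show ?case by auto
  qed
  then show ?thesis using that by blast
qed

lemma one_in_coord_ideal_insert_mult:
  assumes u: "u \<in> polyfun n" and w: "w \<in> polyfun n"
    and one_u: "(\<lambda>v. 1) \<in> coord_ideal n Y (insert u G)"
    and one_w: "(\<lambda>v. 1) \<in> coord_ideal n Y (insert w G)"
  shows "(\<lambda>v. 1) \<in> coord_ideal n Y (insert (\<lambda>v. u v * w v) G)"
proof -
  obtain s f where s: "s \<in> polyfun n" "f \<in> coord_ideal n Y G" "\<forall>v\<in>Y. 1 = f v + s v * u v"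
    using coord_ideal_insertE[OF one_u] by metis
  obtain t g where t: "t \<in> polyfun n" "g \<in> coord_ideal n Y G" "\<forall>v\<in>Y. 1 = g v + t v * w v"
    using coord_ideal_insertE[OF one_w] by metis
  let ?I = "coord_ideal n Y (insert (\<lambda>v. u v * w v) G)"
  have "f \<in> ?I" "g \<in> ?I" using s(2) t(2) by (auto elim: coord_ideal_mono)
  moreover have "(\<lambda>v. (s v * u v) * g v) \<in> ?I"
    by (rule coord_ideal.mult[OF polyfun.mult[OF s(1) u] \<open>g \<in> ?I\<close>])
  moreover have "(\<lambda>v. (s v * t v) * (u v * w v)) \<in> ?I"
    by (rule coord_ideal.mult[OF polyfun.mult[OF s(1) t(1)]]) (simp add: coord_ideal.gen)
  ultimately have "(\<lambda>v. f v + ((s v * u v) * g v + (s v * t v) * (u v * w v))) \<in> ?I"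
    by (intro coord_ideal.add)
  moreover have "\<forall>v\<in>Y. 1 = f v + ((s v * u v) * g v + (s v * t v) * (u v * w v))"
  proof
    fix v assume "v \<in> Y"
    then have "f v + s v * u v * (g v + t v * w v) = 1" using s(3) t(3) by simp
    then show "1 = f v + ((s v * u v) * g v + (s v * t v) * (u v * w v))"
      by (simp add: algebra_simps)
  qed
  ultimately show ?thesis by (rule coord_ideal.eq_on)
qed

lemma one_in_coord_ideal_insert_prod_list:
  assumes "i < n"
    and "\<And>b. b \<in> set bs \<Longrightarrow> (\<lambda>v. 1) \<in> coord_ideal n Y (insert (\<lambda>v. v i - b) G)"
  shows "(\<lambda>v. 1) \<in> coord_ideal n Y (insert (\<lambda>v. \<Prod>b\<leftarrow>bs. (v i - b)) G)"
  using assms(2)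
proof (induction bs)
  case Nil
  then show ?case by (simp add: coord_ideal.gen)
next
  case (Cons b bs)
  have "(\<lambda>v. v i - b) \<in> polyfun n" "(\<lambda>v. \<Prod>b\<leftarrow>bs. (v i - b)) \<in> polyfun n"
    by (auto intro!: polyfun_prod_list polyfun_diff polyfun.intros assms(1))
  from one_in_coord_ideal_insert_mult[OF this Cons.prems[of b] Cons.IH] Cons.prems
  show ?case by simp
qed

lemma coord_ideal_compose_diff:
  assumes g: "g \<in> polyfun m"
    and \<phi>: "\<And>i. i < m \<Longrightarrow> (\<lambda>v. \<phi> v i) \<in> polyfun n"
    and gens: "\<And>i. i < m \<Longrightarrow> (\<lambda>v. \<phi> v i - c i) \<in> coord_ideal n Y G"
  shows "(\<lambda>v. g (\<phi> v) - g c) \<in> coord_ideal n Y G"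
  using g
proof induction
  case (const c)
  then show ?case using coord_ideal.zero by simp
next
  case (var i)
  then show ?case using gens by simp
next
  case (add f g)
  have "(\<lambda>v. (f (\<phi> v) - f c) + (g (\<phi> v) - g c)) \<in> coord_ideal n Y G"
    by (rule coord_ideal.add[OF add.IH])
  then show ?case by (simp add: algebra_simps)
next
  case (mult f g)
  have "(\<lambda>v. f (\<phi> v) * (g (\<phi> v) - g c) + g c * (f (\<phi> v) - f c)) \<in> coord_ideal n Y G"
    by (rule coord_ideal.add[OF coord_ideal.mult[OF polyfun_compose[OF mult.hyps(1) \<phi>] mult.IH(2)]
          coord_ideal_const_mult[OF mult.IH(1)]])
  then show ?case by (simp add: algebra_simps)
qed

lemma coord_ideal_finite_gens:
  fixes m :: nat
  assumes "f \<in> coord_ideal n Y (g ` {..<m})"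
  shows "\<exists>c. (\<forall>j<m. c j \<in> polyfun n) \<and> (\<forall>v\<in>Y. f v = (\<Sum>j<m. c j v * g j v))"
  using assms
proof induction
  case (gen h)
  then obtain j0 where j0: "j0 < m" "h = g j0" by auto
  have "(\<Sum>j<m. (if j = j0 then 1 else 0) * g j v) = g j0 v" for v
    using j0(1) by (simp add: if_distrib[of "\<lambda>x. x * _"] cong: if_cong)
  then show ?case using j0
    by (intro exI[of _ "\<lambda>j v. if j = j0 then 1 else 0"]) (auto intro: polyfun.const)
next
  case zero
  show ?case by (intro exI[of _ "\<lambda>j v. 0"]) (auto intro: polyfun.const)
next
  case (add f h)
  then obtain c1 c2 where "\<forall>j<m. c1 j \<in> polyfun n" "\<forall>v\<in>Y. f v = (\<Sum>j<m. c1 j v * g j v)"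
    "\<forall>j<m. c2 j \<in> polyfun n" "\<forall>v\<in>Y. h v = (\<Sum>j<m. c2 j v * g j v)" by blast
  then show ?case
    by (intro exI[of _ "\<lambda>j v. c1 j v + c2 j v"]) (auto intro: polyfun.add simp: algebra_simps sum.distrib)
next
  case (mult p f)
  then obtain c where "\<forall>j<m. c j \<in> polyfun n" "\<forall>v\<in>Y. f v = (\<Sum>j<m. c j v * g j v)" by blast
  then show ?case using mult.hyps(1)
    by (intro exI[of _ "\<lambda>j v. p v * c j v"]) (auto intro: polyfun.mult simp: sum_distrib_left mult_ac)
next
  case (eq_on f h)
  then show ?case by auto
qed

section \<open>Fibres of a finite polynomial map\<close>

lemma monic_poly_splits:
  assumes "alg_closed TYPE('k::field)" "lead_coeff (p :: 'k poly) = 1"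
  shows "\<exists>bs. \<forall>x. poly p x = (\<Prod>b\<leftarrow>bs. (x - b))"
  using assms(2)
proof (induction "degree p" arbitrary: p rule: less_induct)
  case less
  show ?case
  proof (cases "degree p = 0")
    case True
    then have "p = [:1:]" using less.prems by (metis degree_0_id)
    then show ?thesis by (intro exI[of _ "[]"]) simp
  next
    case False
    then obtain z where "poly p z = 0" using assms(1) unfolding alg_closed_def by blast
    then obtain r where r: "p = [:-z, 1:] * r" using poly_eq_0_iff_dvd by (metis dvdE)
    then have "r \<noteq> 0" using less.prems by auto
    have "lead_coeff p = lead_coeff [:-z, 1:] * lead_coeff r"
      unfolding r by (rule lead_coeff_mult)
    then have "lead_coeff r = 1" using less.prems by simp
    moreover have "degree p = degree [:-z, 1:] + degree r"
      unfolding r by (rule degree_mult_eq) (use \<open>r \<noteq> 0\<close> in auto)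
    then have "degree r < degree p" by simp
    ultimately obtain bs where "\<forall>x. poly r x = (\<Prod>b\<leftarrow>bs. (x - b))" using less.hyps by blast
    then show ?thesis
      by (intro exI[of _ "z # bs"]) (simp add: r algebra_simps)
  qed
qed

lemma monic_splits:
  assumes "alg_closed TYPE('k::field)"
  shows "\<exists>bs. \<forall>x::'k. x ^ d + (\<Sum>j<d. e j * x ^ j) = (\<Prod>b\<leftarrow>bs. (x - b))"
proof -
  define p :: "'k poly" where "p = monom 1 d + (\<Sum>j<d. monom (e j) j)"
  have coeff: "coeff p i = (if i = d then 1 else 0) + (if i < d then e i else 0)" for i
    by (auto simp: p_def coeff_sum)
  have "degree p = d"
    by (intro antisym degree_le le_degree) (simp_all add: coeff)
  then have "lead_coeff p = 1" by (simp add: coeff)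
  then obtain bs where "\<forall>x. poly p x = (\<Prod>b\<leftarrow>bs. (x - b))"
    using monic_poly_splits[OF assms] by blast
  moreover have "poly p x = x ^ d + (\<Sum>j<d. e j * x ^ j)" for x
    by (simp add: p_def poly_sum poly_monom)
  ultimately show ?thesis by metis
qed

text \<open>Reducing the integral equation of x_k modulo the ideal (q(x) - a) leaves a monic polynomial
  in x_k with constant coefficients.\<close>

lemma coordinate_prod_in_fibre_ideal:
  fixes Y :: "(nat \<Rightarrow> 'k::field) set" and m :: nat
  assumes ac: "alg_closed TYPE('k)"
    and q: "\<forall>j<m. q j \<in> polyfun n"
    and int: "integral_over Y (coord_ring n Y) (gen_subalg n Y m q)"
    and k: "k < n"
  shows "\<exists>bs. (\<lambda>v. \<Prod>b\<leftarrow>bs. (v k - b)) \<in> coord_ideal n Y ((\<lambda>j v. q j v - a j) ` {..<m})"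
proof -
  let ?I = "coord_ideal n Y ((\<lambda>j v. q j v - a j) ` {..<m})"
  have "restr Y (\<lambda>v. v k) \<in> coord_ring n Y" by (rule restr_in_coord_ring[OF polyfun.var[OF k]])
  then obtain d c where c: "\<forall>j<d. c j \<in> gen_subalg n Y m q"
    and eq: "\<forall>v\<in>Y. restr Y (\<lambda>v. v k) v ^ d + (\<Sum>j<d. c j v * restr Y (\<lambda>v. v k) v ^ j) = 0"
    using int unfolding integral_over_def by blast
  have "\<forall>j<d. \<exists>g. c j = restr Y (\<lambda>v. g (polymap m q v)) \<and> g \<in> polyfun m"
    using c unfolding gen_subalg_def by blast
  then obtain g where g: "\<And>j. j < d \<Longrightarrow> c j = restr Y (\<lambda>v. g j (polymap m q v)) \<and> g j \<in> polyfun m"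
    by metis
  obtain bs where bs: "\<forall>x::'k. x ^ d + (\<Sum>j<d. g j a * x ^ j) = (\<Prod>b\<leftarrow>bs. (x - b))"
    using monic_splits[OF ac, of d "\<lambda>j. g j a"] by blast
  have compose: "(\<lambda>v. gg (polymap m q v) - gg a) \<in> ?I" if "gg \<in> polyfun m" for gg
  proof (rule coord_ideal_compose_diff[OF that])
    fix i assume "i < m"
    then have "(\<lambda>v. polymap m q v i) = q i" "(\<lambda>v. polymap m q v i - a i) = (\<lambda>v. q i v - a i)"
      by (simp_all add: polymap_component fun_eq_iff)
    moreover have "(\<lambda>v. q i v - a i) \<in> ?I"
      using \<open>i < m\<close> by (intro coord_ideal.gen) auto
    ultimately show "(\<lambda>v. polymap m q v i) \<in> polyfun n" "(\<lambda>v. polymap m q v i - a i) \<in> ?I"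
      using q \<open>i < m\<close> by simp_all
  qed
  define R where "R = (\<lambda>v. - (\<Sum>j<d. v k ^ j * (g j (polymap m q v) - g j a)))"
  have "(\<lambda>v. \<Sum>j<d. v k ^ j * (g j (polymap m q v) - g j a)) \<in> ?I"
    by (intro coord_ideal_sum coord_ideal.mult[OF polyfun_power[OF polyfun.var[OF k]]] compose)
      (use g in auto)
  from coord_ideal_const_mult[OF this, of "-1"] have "R \<in> ?I" by (simp add: R_def)
  moreover have "(\<Prod>b\<leftarrow>bs. (v k - b)) = R v" if "v \<in> Y" for v
  proof -
    have "v k ^ d + (\<Sum>j<d. g j (polymap m q v) * v k ^ j) = 0"
      using eq g that by (simp add: restr_def)
    then have "(\<Prod>b\<leftarrow>bs. (v k - b)) = (v k ^ d + (\<Sum>j<d. g j a * v k ^ j))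
        - (v k ^ d + (\<Sum>j<d. g j (polymap m q v) * v k ^ j))"
      using bs by simp
    also have "\<dots> = R v"
      by (simp add: R_def algebra_simps sum_subtractf[symmetric] sum_negf[symmetric])
    finally show ?thesis .
  qed
  ultimately show ?thesis by (blast intro: coord_ideal.eq_on)
qed

lemma proper_coord_ideal_insert_coordinate:
  fixes Y :: "(nat \<Rightarrow> 'k::field) set" and m :: nat
  assumes ac: "alg_closed TYPE('k)"
    and q: "\<forall>j<m. q j \<in> polyfun n"
    and int: "integral_over Y (coord_ring n Y) (gen_subalg n Y m q)"
    and k: "k < n"
    and G: "(\<lambda>j v. q j v - a j) ` {..<m} \<subseteq> G" "(\<lambda>v. 1) \<notin> coord_ideal n Y G"
  shows "\<exists>c. (\<lambda>v. 1) \<notin> coord_ideal n Y (insert (\<lambda>v. v k - c) G)"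
proof (rule ccontr)
  assume no_c: "\<nexists>c. (\<lambda>v. 1) \<notin> coord_ideal n Y (insert (\<lambda>v. v k - c) G)"
  obtain bs where "(\<lambda>v. \<Prod>b\<leftarrow>bs. (v k - b)) \<in> coord_ideal n Y ((\<lambda>j v. q j v - a j) ` {..<m})"
    using coordinate_prod_in_fibre_ideal[OF ac q int k, of a] by blast
  then have "(\<lambda>v. \<Prod>b\<leftarrow>bs. (v k - b)) \<in> coord_ideal n Y G" using G(1) by (rule coord_ideal_mono)
  moreover have "(\<lambda>v. 1) \<in> coord_ideal n Y (insert (\<lambda>v. \<Prod>b\<leftarrow>bs. (v k - b)) G)"
    using no_c by (intro one_in_coord_ideal_insert_prod_list[OF k]) blast
  ultimately have "(\<lambda>v. 1) \<in> coord_ideal n Y G" by (rule coord_ideal_insert_absorb[rotated])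
  then show False using G(2) by contradiction
qed

lemma proper_coord_ideal_extends_to_point:
  fixes Y :: "(nat \<Rightarrow> 'k::field) set" and m :: nat
  assumes ac: "alg_closed TYPE('k)"
    and q: "\<forall>j<m. q j \<in> polyfun n"
    and int: "integral_over Y (coord_ring n Y) (gen_subalg n Y m q)"
    and G: "(\<lambda>j v. q j v - a j) ` {..<m} \<subseteq> G" "(\<lambda>v. 1) \<notin> coord_ideal n Y G"
  shows "\<exists>b\<in>kspace n. (\<lambda>v. 1) \<notin> coord_ideal n Y (G \<union> (\<lambda>i v. v i - b i) ` {..<n})"
proof -
  have "k \<le> n \<Longrightarrow> \<exists>b. (\<lambda>v. 1) \<notin> coord_ideal n Y (G \<union> (\<lambda>i v. v i - b i) ` {..<k})" for k
  proof (induction k)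
    case 0
    then show ?case using G(2) by simp
  next
    case (Suc k)
    then obtain b where b: "(\<lambda>v. 1) \<notin> coord_ideal n Y (G \<union> (\<lambda>i v. v i - b i) ` {..<k})" by auto
    have "(\<lambda>j v. q j v - a j) ` {..<m} \<subseteq> G \<union> (\<lambda>i v. v i - b i) ` {..<k}" using G(1) by blast
    then obtain c where "(\<lambda>v. 1) \<notin> coord_ideal n Y (insert (\<lambda>v. v k - c) (G \<union> (\<lambda>i v. v i - b i) ` {..<k}))"
      using proper_coord_ideal_insert_coordinate[OF ac q int Suc_le_lessD[OF Suc.prems] _ b] by blast
    moreover have "insert (\<lambda>v. v k - c) (G \<union> (\<lambda>i v. v i - b i) ` {..<k})
        = G \<union> (\<lambda>i v. v i - (b(k := c)) i) ` {..<Suc k}"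
      by (auto simp: lessThan_Suc image_iff)
    ultimately have "(\<lambda>v. 1) \<notin> coord_ideal n Y (G \<union> (\<lambda>i v. v i - (b(k := c)) i) ` {..<Suc k})"
      by simp
    then show ?case by blast
  qed
  then obtain b where b: "(\<lambda>v. 1) \<notin> coord_ideal n Y (G \<union> (\<lambda>i v. v i - b i) ` {..<n})" by blast
  define b' where "b' i = (if i < n then b i else 0)" for i
  have "(\<lambda>i v. v i - b i) ` {..<n} = (\<lambda>i v. v i - b' i) ` {..<n}"
    by (rule image_cong) (auto simp: b'_def)
  then have "(\<lambda>v. 1) \<notin> coord_ideal n Y (G \<union> (\<lambda>i v. v i - b' i) ` {..<n})" using b by simp
  moreover have "b' \<in> kspace n" by (simp add: kspace_def b'_def)
  ultimately show ?thesis by blast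
qed

lemma coord_ideal_eval_point:
  fixes b :: "nat \<Rightarrow> 'k::field"
  assumes "(\<lambda>v. 1) \<notin> coord_ideal n Y H" "\<And>i. i < n \<Longrightarrow> (\<lambda>v. v i - b i) \<in> coord_ideal n Y H"
    and "f \<in> polyfun n" "f \<in> coord_ideal n Y H"
  shows "f b = 0"
proof -
  have "(\<lambda>v. f v - f b) \<in> coord_ideal n Y H"
    by (rule coord_ideal_compose_diff[OF assms(3), where \<phi>="\<lambda>v. v"]) (auto intro: polyfun.var assms(2))
  from coord_ideal_diff[OF assms(4) this] have "(\<lambda>v. f b) \<in> coord_ideal n Y H" by simp
  then show ?thesis using one_in_coord_ideal_if_const assms(1) by blast
qed

lemma one_in_fibre_ideal:
  fixes Y :: "(nat \<Rightarrow> 'k::field) set" and m :: nat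
  assumes ac: "alg_closed TYPE('k)" and Y: "algebraic_set n Y"
    and q: "\<forall>j<m. q j \<in> polyfun n"
    and int: "integral_over Y (coord_ring n Y) (gen_subalg n Y m q)"
    and a: "a \<in> kspace m" "a \<notin> polymap m q ` Y"
  shows "(\<lambda>v. 1) \<in> coord_ideal n Y ((\<lambda>j v. q j v - a j) ` {..<m})"
proof (rule ccontr)
  assume "(\<lambda>v. 1) \<notin> coord_ideal n Y ((\<lambda>j v. q j v - a j) ` {..<m})"
  then obtain b where b: "b \<in> kspace n"
    and proper: "(\<lambda>v. 1) \<notin> coord_ideal n Y ((\<lambda>j v. q j v - a j) ` {..<m} \<union> (\<lambda>i v. v i - b i) ` {..<n})"
    using proper_coord_ideal_extends_to_point[OF ac q int subset_refl] by blast
  let ?H = "(\<lambda>j v. q j v - a j) ` {..<m} \<union> (\<lambda>i v. v i - b i) ` {..<n}"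
  have eval: "f b = 0" if "f \<in> polyfun n" "f \<in> coord_ideal n Y ?H" for f
    using coord_ideal_eval_point[OF proper _ that] by (blast intro: coord_ideal.gen)
  obtain F where F: "F \<subseteq> polyfun n" "Y = zero_set n F"
    using Y unfolding algebraic_set_def by blast
  have "f b = 0" if "f \<in> F" for f
    using F that by (intro eval) (auto simp: zero_set_def intro: coord_ideal.eq_on[OF coord_ideal.zero])
  then have "b \<in> Y" using F(2) b by (simp add: zero_set_def)
  moreover have "polymap m q b = a"
  proof
    fix j show "polymap m q b j = a j"
    proof (cases "j < m")
      case True
      then have "(\<lambda>v. q j v - a j) \<in> polyfun n" "(\<lambda>v. q j v - a j) \<in> coord_ideal n Y ?H"
        using q by (auto intro: polyfun_diff polyfun.const coord_ideal.gen)
      then have "q j b - a j = 0" by (rule eval)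
      then show ?thesis using True by (simp add: polymap_component)
    qed (use a(1) in \<open>simp add: polymap_def kspace_def\<close>)
  qed
  ultimately show False using a(2) by blast
qed

lemma finite_kspace_grid:
  assumes "\<And>i. i < n \<Longrightarrow> finite (B i)"
  shows "finite {v \<in> kspace n. \<forall>i<n. v i \<in> B i}"
proof (rule finite_subset)
  show "{v \<in> kspace n. \<forall>i<n. v i \<in> B i} \<subseteq> (\<lambda>f i. if i < n then f i else 0) ` (\<Pi>\<^sub>E i \<in> {..<n}. B i)"
  proof
    fix v assume v: "v \<in> {v \<in> kspace n. \<forall>i<n. v i \<in> B i}"
    then have "v = (\<lambda>i. if i < n then restrict v {..<n} i else 0)"
      by (auto simp: kspace_def)
    moreover have "restrict v {..<n} \<in> (\<Pi>\<^sub>E i \<in> {..<n}. B i)" using v by auto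
    ultimately show "v \<in> (\<lambda>f i. if i < n then f i else 0) ` (\<Pi>\<^sub>E i \<in> {..<n}. B i)" by blast
  qed
  show "finite ((\<lambda>f i. if i < n then f i else 0) ` (\<Pi>\<^sub>E i \<in> {..<n}. B i))"
    by (intro finite_imageI finite_PiE) (auto intro: assms)
qed

lemma finite_fibre:
  fixes Y :: "(nat \<Rightarrow> 'k::field) set" and m :: nat
  assumes ac: "alg_closed TYPE('k)" and Y: "Y \<subseteq> kspace n"
    and q: "\<forall>j<m. q j \<in> polyfun n"
    and int: "integral_over Y (coord_ring n Y) (gen_subalg n Y m q)"
  shows "finite {v \<in> Y. polymap m q v = a}"
proof -
  let ?I = "coord_ideal n Y ((\<lambda>j v. q j v - a j) ` {..<m})"
  define bs where "bs k = (SOME bs. (\<lambda>v. \<Prod>b\<leftarrow>bs. (v k - b)) \<in> ?I)" for k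
  have bs: "(\<lambda>v. \<Prod>b\<leftarrow>bs k. (v k - b)) \<in> ?I" if "k < n" for k
    unfolding bs_def by (rule someI_ex[OF coordinate_prod_in_fibre_ideal[OF ac q int that]])
  have "v k \<in> set (bs k)" if "v \<in> Y" "polymap m q v = a" "k < n" for v k
  proof -
    have "\<forall>g\<in>(\<lambda>j v. q j v - a j) ` {..<m}. g v = 0"
      using that(2) by (auto simp: polymap_component)
    then have "(\<Prod>b\<leftarrow>bs k. (v k - b)) = 0"
      using coord_ideal_vanishes[OF bs[OF that(3)] that(1)] by blast
    then show ?thesis by (auto simp: prod_list_zero_iff)
  qed
  then have "{v \<in> Y. polymap m q v = a} \<subseteq> {v \<in> kspace n. \<forall>k<n. v k \<in> set (bs k)}"
    using Y by blast
  moreover have "finite {v \<in> kspace n. \<forall>k<n. v k \<in> set (bs k)}"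
    by (rule finite_kspace_grid) simp
  ultimately show ?thesis by (rule finite_subset)
qed

section \<open>Isolated points\<close>

lemma exists_polyfun_separating:
  fixes v0 :: "nat \<Rightarrow> 'k::field"
  assumes "finite W" "W \<subseteq> kspace n" "v0 \<in> kspace n" "v0 \<notin> W"
  shows "\<exists>h\<in>polyfun n. h v0 \<noteq> 0 \<and> (\<forall>w\<in>W. h w = 0)"
  using assms
proof (induction W rule: finite_induct)
  case empty
  show ?case by (intro bexI[of _ "\<lambda>v. 1"]) (auto intro: polyfun.const)
next
  case (insert w W)
  then obtain h where h: "h \<in> polyfun n" "h v0 \<noteq> 0" "\<forall>w\<in>W. h w = 0" by auto
  have "w \<noteq> v0" "w \<in> kspace n" using insert.prems by auto
  then obtain i where i: "i < n" "w i \<noteq> v0 i"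
    using insert.prems(2) by (auto simp: kspace_def fun_eq_iff) (metis not_le)
  show ?case
  proof (intro bexI[of _ "\<lambda>v. h v * (v i - w i)"] conjI ballI)
    show "(\<lambda>v. h v * (v i - w i)) \<in> polyfun n"
      by (intro polyfun.mult h(1) polyfun_diff polyfun.intros i)
    show "h v0 * (v0 i - w i) \<noteq> 0" using h(2) i(2) by simp
    fix x assume "x \<in> insert w W"
    then show "h x * (x i - w i) = 0" using h(3) by auto
  qed
qed

lemma isolated_pointE:
  assumes "y0 \<in> isolated_points n Y" "Y \<subseteq> kspace n"
  obtains f where "f \<in> polyfun n" "f y0 \<noteq> 0" "\<And>v. v \<in> Y \<Longrightarrow> v \<noteq> y0 \<Longrightarrow> f v = 0"
proof -
  obtain F where F: "F \<subseteq> polyfun n" "Y - {y0} = zero_set n F" and "y0 \<in> Y"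
    using assms(1) unfolding isolated_points_def algebraic_set_def by blast
  then have "y0 \<notin> zero_set n F" by blast
  then obtain f where "f \<in> F" "f y0 \<noteq> 0"
    using \<open>y0 \<in> Y\<close> assms(2) by (auto simp: zero_set_def)
  moreover have "\<And>v. v \<in> Y \<Longrightarrow> v \<noteq> y0 \<Longrightarrow> f v = 0"
    using F(2) \<open>f \<in> F\<close> by (auto simp: zero_set_def)
  ultimately show ?thesis using that F(1) by blast
qed

text \<open>Y - {v0} is cut out by the equations of Y together with p h, where h separates v0 from the
  other points of the support of p.\<close>

lemma isolated_point_if_finite_support:
  fixes Y :: "(nat \<Rightarrow> 'k::field) set"
  assumes Y: "algebraic_set n Y" and p: "p \<in> polyfun n" "v0 \<in> Y" "p v0 \<noteq> 0"
    and fin: "finite {v \<in> Y. p v \<noteq> 0}"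
  shows "v0 \<in> isolated_points n Y"
proof -
  obtain F where F: "F \<subseteq> polyfun n" "Y = zero_set n F"
    using Y unfolding algebraic_set_def by blast
  obtain h where h: "h \<in> polyfun n" "h v0 \<noteq> 0" "\<forall>w\<in>{v \<in> Y. p v \<noteq> 0} - {v0}. h w = 0"
    using exists_polyfun_separating[of "{v \<in> Y. p v \<noteq> 0} - {v0}" n v0]
      fin p(2) algebraic_set_subset_kspace[OF Y] by auto
  have "Y - {v0} = zero_set n (insert (\<lambda>v. p v * h v) F)"
    using F(2) p(3) h(2,3) by (auto simp: zero_set_def)
  moreover have "insert (\<lambda>v. p v * h v) F \<subseteq> polyfun n"
    using F(1) p(1) h(1) by (auto intro: polyfun.mult)
  ultimately show ?thesis using p(2) unfolding isolated_points_def algebraic_set_def by blast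
qed

section \<open>The spectra\<close>

lemma point_spectrum_iff:
  "a \<in> point_spectrum (coord_ring n Y) pointwise_mult (\<lambda>c. restr Y (\<lambda>v. c)) (\<lambda>j. restr Y (q j)) m
    \<longleftrightarrow> a \<in> kspace m \<and> (\<exists>p\<in>polyfun n. (\<exists>v\<in>Y. p v \<noteq> 0)
          \<and> (\<forall>j<m. \<forall>v\<in>Y. (q j v - a j) * p v = (0::'k::comm_ring_1)))"
proof -
  have "restr Y p \<noteq> 0 \<and> (\<forall>i<m. \<forall>v. (restr Y (q i) - restr Y (\<lambda>v. a i)) v * restr Y p v = 0)
      \<longleftrightarrow> (\<exists>v\<in>Y. p v \<noteq> 0) \<and> (\<forall>j<m. \<forall>v\<in>Y. (q j v - a j) * p v = 0)" for p
    by (auto simp: restr_def fun_eq_iff)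
  then show ?thesis
    unfolding point_spectrum_def koszul_homology_top_nonzero_iff bex_coord_ring_iff by simp
qed

lemma point_spectrum_finite_map:
  fixes Y :: "(nat \<Rightarrow> 'k::field) set" and m :: nat
  assumes ac: "alg_closed TYPE('k)" and Y: "algebraic_set n Y"
    and q: "\<forall>j<m. q j \<in> polyfun n"
    and int: "integral_over Y (coord_ring n Y) (gen_subalg n Y m q)"
  shows "point_spectrum (coord_ring n Y) pointwise_mult (\<lambda>c. restr Y (\<lambda>v. c)) (\<lambda>j. restr Y (q j)) m
      = polymap m q ` isolated_points n Y"
proof (intro set_eqI iffI)
  fix a
  assume "a \<in> point_spectrum (coord_ring n Y) pointwise_mult (\<lambda>c. restr Y (\<lambda>v. c)) (\<lambda>j. restr Y (q j)) m"
  then obtain p v0 where a: "a \<in> kspace m" and p: "p \<in> polyfun n" "v0 \<in> Y" "p v0 \<noteq> 0"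
    and ann: "\<And>j v. j < m \<Longrightarrow> v \<in> Y \<Longrightarrow> (q j v - a j) * p v = 0"
    unfolding point_spectrum_iff by blast
  have fibre: "polymap m q v = a" if "v \<in> Y" "p v \<noteq> 0" for v
    using ann[OF _ that(1)] that(2) a by (auto simp: polymap_def kspace_def fun_eq_iff)
  then have "{v \<in> Y. p v \<noteq> 0} \<subseteq> {v \<in> Y. polymap m q v = a}" by blast
  then have "finite {v \<in> Y. p v \<noteq> 0}"
    by (rule finite_subset) (rule finite_fibre[OF ac algebraic_set_subset_kspace[OF Y] q int])
  then have "v0 \<in> isolated_points n Y" by (rule isolated_point_if_finite_support[OF Y p])
  then show "a \<in> polymap m q ` isolated_points n Y" using fibre[OF p(2,3)] by blast
next
  fix a assume "a \<in> polymap m q ` isolated_points n Y"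
  then obtain y0 where y0: "y0 \<in> isolated_points n Y" "a = polymap m q y0" by blast
  obtain f where f: "f \<in> polyfun n" "f y0 \<noteq> 0" "\<And>v. v \<in> Y \<Longrightarrow> v \<noteq> y0 \<Longrightarrow> f v = 0"
    using isolated_pointE[OF y0(1) algebraic_set_subset_kspace[OF Y]] by blast
  moreover have "y0 \<in> Y" using y0(1) by (simp add: isolated_points_def)
  ultimately show "a \<in> point_spectrum (coord_ring n Y) pointwise_mult (\<lambda>c. restr Y (\<lambda>v. c))
      (\<lambda>j. restr Y (q j)) m"
    unfolding point_spectrum_iff using y0(2)
    by (auto simp: polymap_in_kspace polymap_component)
qed

lemma taylor_spectrum_finite_map:
  fixes Y :: "(nat \<Rightarrow> 'k::field) set" and m :: nat
  assumes ac: "alg_closed TYPE('k)" and Y: "algebraic_set n Y"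
    and q: "\<forall>j<m. q j \<in> polyfun n"
    and int: "integral_over Y (coord_ring n Y) (gen_subalg n Y m q)"
  shows "taylor_spectrum (coord_ring n Y) pointwise_mult (\<lambda>c. restr Y (\<lambda>v. c)) (\<lambda>j. restr Y (q j)) m
      = polymap m q ` Y"
proof (intro set_eqI iffI)
  fix a
  let ?y = "\<lambda>i. restr Y (q i) - restr Y (\<lambda>v. a i)"
  have y: "?y i \<in> coord_ring n Y" if "i < m" for i
    using q that by (auto intro!: coord_ring_diff restr_in_coord_ring polyfun.const)
  {
    assume "a \<in> taylor_spectrum (coord_ring n Y) pointwise_mult (\<lambda>c. restr Y (\<lambda>v. c)) (\<lambda>j. restr Y (q j)) m"
    then have a: "a \<in> kspace m" and not_exact: "\<not> koszul_exact (coord_ring n Y) pointwise_mult ?y m"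
      by (simp_all add: taylor_spectrum_def)
    show "a \<in> polymap m q ` Y"
    proof (rule ccontr)
      assume "a \<notin> polymap m q ` Y"
      then have "(\<lambda>v. 1) \<in> coord_ideal n Y ((\<lambda>j v. q j v - a j) ` {..<m})"
        by (rule one_in_fibre_ideal[OF ac Y q int a])
      then obtain c where c: "\<forall>j<m. c j \<in> polyfun n" "\<forall>v\<in>Y. 1 = (\<Sum>j<m. c j v * (q j v - a j))"
        using coord_ideal_finite_gens by blast
      have "koszul_exact (coord_ring n Y) pointwise_mult ?y m"
        using c by (intro koszul_exact_if_unit_ideal[of m ?y n Y "\<lambda>j. restr Y (c j)"] y
            restr_in_coord_ring) (auto simp: restr_def)
      then show False using not_exact by contradiction
    qed
  next
    assume "a \<in> polymap m q ` Y"
    then obtain v0 where v0: "v0 \<in> Y" "a = polymap m q v0" by blast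
    then have "koszul_homology_nonzero (coord_ring n Y) pointwise_mult ?y m 0"
      by (intro koszul_homology_zero_nonzero_if_common_zero) (auto simp: restr_def polymap_component)
    then show "a \<in> taylor_spectrum (coord_ring n Y) pointwise_mult (\<lambda>c. restr Y (\<lambda>v. c))
        (\<lambda>j. restr Y (q j)) m"
      using v0(2) by (auto simp: taylor_spectrum_def koszul_exact_def polymap_in_kspace)
  }
qed

theorem corollary3p9:
  fixes Y :: "(nat \<Rightarrow> 'k::field) set" and n :: nat
  assumes "alg_closed TYPE('k)"
    and "algebraic_set n Y"
  shows "point_spectrum (coord_ring n Y) (\<lambda>f g v. f v * g v) (\<lambda>c. restr Y (\<lambda>v. c))
           (\<lambda>i. restr Y (\<lambda>v. v i)) n = isolated_points n Y
    \<and> (\<forall>(m::nat) (q :: nat \<Rightarrow> (nat \<Rightarrow> 'k) \<Rightarrow> 'k).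
          (\<forall>j<m. q j \<in> polyfun n) \<and> integral_over Y (coord_ring n Y) (gen_subalg n Y m q) \<longrightarrow>
          taylor_spectrum (coord_ring n Y) (\<lambda>f g v. f v * g v) (\<lambda>c. restr Y (\<lambda>v. c))
             (\<lambda>j. restr Y (q j)) m = polymap m q ` Y
        \<and> point_spectrum (coord_ring n Y) (\<lambda>f g v. f v * g v) (\<lambda>c. restr Y (\<lambda>v. c))
             (\<lambda>j. restr Y (q j)) m = polymap m q ` isolated_points n Y)"
proof -
  have "polymap n (\<lambda>i v. v i) ` isolated_points n Y = (\<lambda>v. v) ` isolated_points n Y"
    using algebraic_set_subset_kspace[OF assms(2)]
    by (intro image_cong) (auto simp: isolated_points_def polymap_coordinates)
  then have "point_spectrum (coord_ring n Y) (\<lambda>f g v. f v * g v) (\<lambda>c. restr Y (\<lambda>v. c))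
      (\<lambda>i. restr Y (\<lambda>v. v i)) n = isolated_points n Y"
    using point_spectrum_finite_map[OF assms, of n "\<lambda>i v. v i"]
      integral_over_coordinates[OF assms(2)] by (simp add: polyfun.var)
  then show ?thesis
    using taylor_spectrum_finite_map[OF assms] point_spectrum_finite_map[OF assms] by blast
qed

end
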